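(* Let $s\ge 1$, $q=4^{2s}$, and let $\theta$ be the automorphism of $F_q$ given by $\theta(a)=a^{4^s}$. Let $n$ be an even positive integer and let $g(x)\in F_q[x;\theta]$ be a right divisor of $x^n-1$ in $F_q[x;\theta]$ whose degree $m$ is even. Then the skew cyclic code $C=\langle g(x)\rangle$ of length $n$ over $F_q$ is a reversible DNA code if and only if $g(x)$ is a palindromic polynomial.
   Context: $F_q[x;\theta]$ is the skew polynomial ring: polynomials $\sum a_ix^i$ with $a_i\in F_q$, usual addition, and multiplication determined by $xa=\theta(a)x$ for $a\in F_q$. A skew cyclic code of length $n$ is a linear code $C\subseteq F_q^n$ such that $(\theta(c_{n-1}),\theta(c_0),\ldots,\theta(c_{n-2}))\in C$ whenever $(c_0,\ldots,c_{n-1})\in C$; identifying $(c_0,\ldots,c_{n-1})$ with $c_0+c_1x+\dots+c_{n-1}x^{n-1}$, such codes are the left $F_q[x;\theta]$-submodules of $F_q[x;\theta]/(x^n-1)$, and $\langle g(x)\rangle$ denotes the left submodule generated by $g(x)$ (the generator need not be monic). A polynomial $f(x)=a_0+a_1x+\dots+a_tx^t$ of degree $t$ is palindromic if $a_i=a_{t-i}$ for all $i$, and $\theta$-palindromic if $a_i=\theta(a_{t-i})$ for all $i$. DNA correspondence: there is a fixed bijection $\tau:F_{4^{2s}}\to\{A,T,G,C\}^{2s}$ such that for every $\beta$, $\tau(\beta^{4^s})$ is the reverse of the string $\tau(\beta)$; it extends to $\phi:F_q^n\to\{A,T,G,C\}^{2sn}$ by concatenation, $\phi(c_0,\ldots,c_{n-1})=(\tau(c_0),\ldots,\tau(c_{n-1}))$.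 A code $C\subseteq F_q^n$ is a reversible DNA code if the reverse string $\phi(c)^r$ lies in $\phi(C)$ for all $c\in C$; equivalently, $(\theta(c_{n-1}),\ldots,\theta(c_1),\theta(c_0))\in C$ for every $(c_0,\ldots,c_{n-1})\in C$. *)

theory Defs
  imports "HOL-Computational_Algebra.Polynomial"
begin

text \<open>Skew polynomials over a ring are represented by ordinary polynomials
  (their coefficient sequences); addition is the usual one, and the product is the
  skew product determined by x a = theta(a) x, i.e.
  (a x^i)(b x^j) = a theta^i(b) x^(i+j).\<close>

definition skew_mult :: "('a::comm_ring_1 \<Rightarrow> 'a) \<Rightarrow> 'a poly \<Rightarrow> 'a poly \<Rightarrow> 'a poly" where
  "skew_mult \<theta> p r =
     (\<Sum>i\<le>degree p. \<Sum>j\<le>degree r. monom (coeff p i * (\<theta> ^^ i) (coeff r j)) (i + j))"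

definition xn_minus_1 :: "nat \<Rightarrow> 'a::comm_ring_1 poly" where
  "xn_minus_1 n = monom 1 n - 1"

definition skew_right_dvd :: "('a::comm_ring_1 \<Rightarrow> 'a) \<Rightarrow> 'a poly \<Rightarrow> 'a poly \<Rightarrow> bool" where
  "skew_right_dvd \<theta> g f \<longleftrightarrow> (\<exists>h. f = skew_mult \<theta> h g)"

definition vec_of :: "nat \<Rightarrow> 'a::zero poly \<Rightarrow> 'a list" where
  "vec_of n c = map (coeff c) [0..<n]"

text \<open>The skew cyclic code <g> of length n: the left submodule of
  F[x;theta]/(x^n - 1) generated by g, i.e. the classes of the left multiples f g,
  each represented by its unique representative of degree < n, viewed as vectors
  in F^n.\<close>
definition skew_cyclic_code :: "('a::comm_ring_1 \<Rightarrow> 'a) \<Rightarrow> nat \<Rightarrow> 'a poly \<Rightarrow> 'a list set" where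
  "skew_cyclic_code \<theta> n g =
     vec_of n ` {c. degree c < n \<and>
        (\<exists>f k. c = skew_mult \<theta> f g + skew_mult \<theta> k (xn_minus_1 n))}"

definition palindromic :: "'a::zero poly \<Rightarrow> bool" where
  "palindromic f \<longleftrightarrow> (\<forall>i\<le>degree f. coeff f i = coeff f (degree f - i))"

datatype nucleotide = A | T | G | C

definition dna_map :: "('a \<Rightarrow> nucleotide list) \<Rightarrow> 'a list \<Rightarrow> nucleotide list" where
  "dna_map \<tau> c = concat (map \<tau> c)"

definition reversible_dna_code :: "('a \<Rightarrow> nucleotide list) \<Rightarrow> 'a list set \<Rightarrow> bool" where
  "reversible_dna_code \<tau> Cd \<longleftrightarrow> (\<forall>c\<in>Cd. rev (dna_map \<tau> c) \<in> dna_map \<tau> ` Cd)"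

end

theory Submission
  imports Defs
begin

text \<open>Since \<open>\<theta>\<close> is an involution, a left skew product splits along the parity of the
  exponents of the left factor: \<open>f g = f\<^sub>e\<^sub>v\<^sub>e\<^sub>n g + f\<^sub>o\<^sub>d\<^sub>d \<theta>(g)\<close>. The DNA reverse of a
  codeword \<open>c\<close> is \<open>\<theta>(x\<^sup>n\<^sup>-\<^sup>1 c(1/x))\<close>. If \<open>g\<close> is palindromic of even degree \<open>m\<close> and
  \<open>c = F g\<close>, this reverse equals \<open>\<theta>(x\<^sup>N F(1/x)) g\<close> with \<open>N = n - 1 - m\<close> odd: reversing by
  an odd length exchanges the even and odd parts of \<open>F\<close>, which exactly undoes the twist
  by \<open>\<theta>\<close>. Conversely, if the reverse of \<open>g\<close> is a left multiple \<open>F g\<close>, then \<open>g(0) \<noteq> 0\<close>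
  forces \<open>F = a x\<^sup>N\<close>, so the reciprocal of \<open>g\<close> is \<open>b g\<close> with \<open>b\<^sup>2 = 1\<close>, i.e. \<open>b = 1\<close> in
  characteristic two.\<close>

definition parity_part :: "bool \<Rightarrow> 'a::comm_monoid_add poly \<Rightarrow> 'a poly" where
  "parity_part b p = (\<Sum>i\<le>degree p. if even i = b then monom (coeff p i) i else 0)"

abbreviation even_part :: "'a::comm_monoid_add poly \<Rightarrow> 'a poly" where
  "even_part \<equiv> parity_part True"

abbreviation odd_part :: "'a::comm_monoid_add poly \<Rightarrow> 'a poly" where
  "odd_part \<equiv> parity_part False"

lemma coeff_parity_part: "coeff (parity_part b p) k = (if even k = b then coeff p k else 0)"
proof -
  have "coeff (parity_part b p) k =
      (\<Sum>i\<le>degree p. if i = k then (if even i = b then coeff p i else 0) else 0)"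
    unfolding parity_part_def coeff_sum by (intro sum.cong) auto
  then show ?thesis by (auto simp: coeff_eq_0)
qed

lemma parity_part_add: "parity_part b (p + q) = parity_part b p + parity_part b q"
  by (rule poly_eqI) (simp add: coeff_parity_part)

lemma parity_part_0 [simp]: "parity_part b 0 = 0"
  by (rule poly_eqI) (simp add: coeff_parity_part)

lemma parity_part_idem [simp]: "parity_part b (parity_part b p) = parity_part b p"
  by (rule poly_eqI) (simp add: coeff_parity_part)

lemma degree_parity_part_le: "degree (parity_part b p) \<le> degree p"
  by (intro degree_le allI impI) (simp add: coeff_parity_part coeff_eq_0)

lemma parity_part_map_poly:
  "f 0 = 0 \<Longrightarrow> parity_part b (map_poly f p) = map_poly f (parity_part b p)"
  by (rule poly_eqI) (simp add: coeff_parity_part coeff_map_poly)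

lemma parity_part_mult:
  fixes q p :: "'a::comm_semiring_1 poly"
  assumes q: "parity_part c q = q"
  shows "parity_part b (q * p) = q * parity_part (b = c) p"
proof (rule poly_eqI)
  fix k
  have q0: "coeff q i = 0" if "even i \<noteq> c" for i
    using arg_cong[OF q, of "\<lambda>r. coeff r i"] that by (simp add: coeff_parity_part)
  have "coeff q i * (if even (k - i) = (b = c) then coeff p (k - i) else 0) =
      (if even k = b then coeff q i * coeff p (k - i) else 0)" if "i \<le> k" for i
    using q0[of i] that by (cases "even i = c") auto
  then show "coeff (parity_part b (q * p)) k = coeff (q * parity_part (b = c) p) k"
    by (simp add: coeff_parity_part coeff_mult)
qed

definition rev_poly :: "nat \<Rightarrow> 'a::comm_monoid_add poly \<Rightarrow> 'a poly" where
  "rev_poly N p = (\<Sum>j\<le>N. monom (coeff p j) (N - j))"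

lemma coeff_rev_poly: "coeff (rev_poly N p) i = (if i \<le> N then coeff p (N - i) else 0)"
proof -
  have "coeff (rev_poly N p) i = (\<Sum>j\<le>N. if j = N - i \<and> i \<le> N then coeff p j else 0)"
    unfolding rev_poly_def coeff_sum by (intro sum.cong) auto
  then show ?thesis by (cases "i \<le> N") auto
qed

lemma rev_poly_add: "rev_poly N (p + q) = rev_poly N p + rev_poly N q"
  by (rule poly_eqI) (simp add: coeff_rev_poly)

lemma rev_poly_0 [simp]: "rev_poly N 0 = 0"
  by (rule poly_eqI) (simp add: coeff_rev_poly)

lemma degree_rev_poly_le: "degree (rev_poly N p) \<le> N"
  by (rule degree_le) (simp add: coeff_rev_poly)

lemma rev_poly_map_poly: "f 0 = 0 \<Longrightarrow> rev_poly N (map_poly f p) = map_poly f (rev_poly N p)"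
  by (rule poly_eqI) (simp add: coeff_map_poly coeff_rev_poly)

lemma parity_part_rev_poly: "parity_part b (rev_poly N p) = rev_poly N (parity_part (b = even N) p)"
  by (rule poly_eqI) (auto simp: coeff_rev_poly coeff_parity_part)

lemma rev_poly_eq_monom_mult_reflect_poly:
  fixes p :: "'a::comm_semiring_1 poly"
  assumes "degree p \<le> N"
  shows "rev_poly N p = monom 1 (N - degree p) * reflect_poly p"
proof (rule poly_eqI)
  fix i
  consider "i < N - degree p" | "N - degree p \<le> i" "i \<le> N" | "N < i"
    by linarith
  then show "coeff (rev_poly N p) i = coeff (monom 1 (N - degree p) * reflect_poly p) i"
  proof cases
    case 1
    then have "coeff p (N - i) = 0" by (intro coeff_eq_0) linarith
    with 1 show ?thesis by (simp add: coeff_rev_poly coeff_monom_mult)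
  next
    case 2
    then have "degree p - (i - (N - degree p)) = N - i" "\<not> degree p < i - (N - degree p)"
      using assms by linarith+
    with 2 show ?thesis by (simp add: coeff_rev_poly coeff_monom_mult coeff_reflect_poly)
  next
    case 3
    then have "degree p < i - (N - degree p)" "\<not> i < N - degree p" "\<not> i \<le> N"
      using assms by linarith+
    then show ?thesis by (simp add: coeff_rev_poly coeff_monom_mult coeff_reflect_poly)
  qed
qed

lemma rev_poly_mult:
  fixes p q :: "'a::idom poly"
  assumes "degree p \<le> a" "degree q \<le> b"
  shows "rev_poly (a + b) (p * q) = rev_poly a p * rev_poly b q"
proof (cases "p = 0 \<or> q = 0")
  case True then show ?thesis by auto
next
  case False
  then have d: "degree (p * q) = degree p + degree q" by (simp add: degree_mult_eq)
  then have "monom (1::'a) (a + b - degree (p * q)) = monom 1 (a - degree p) * monom 1 (b - degree q)"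
    using assms by (simp add: mult_monom)
  then show ?thesis
    using assms d by (simp add: rev_poly_eq_monom_mult_reflect_poly reflect_poly_mult mult_ac)
qed

lemma palindromic_iff_rev_poly: "palindromic g \<longleftrightarrow> rev_poly (degree g) g = g"
proof
  assume pal: "palindromic g"
  show "rev_poly (degree g) g = g"
  proof (rule poly_eqI)
    fix i
    show "coeff (rev_poly (degree g) g) i = coeff g i"
    proof (cases "i \<le> degree g")
      case True
      moreover have "coeff g i = coeff g (degree g - i)"
        using pal True unfolding palindromic_def by blast
      ultimately show ?thesis by (simp add: coeff_rev_poly)
    qed (simp add: coeff_rev_poly coeff_eq_0)
  qed
next
  assume "rev_poly (degree g) g = g"
  then have "coeff g i = coeff g (degree g - i)" if "i \<le> degree g" for i
    using that by (metis coeff_rev_poly)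
  then show "palindromic g" unfolding palindromic_def by blast
qed

lemma coeff_xn_minus_1:
  "coeff (xn_minus_1 n :: 'a::comm_ring_1 poly) i =
    (if i = n then 1 else 0) - (if i = 0 then 1 else 0)"
  by (simp add: xn_minus_1_def)

lemma degree_xn_minus_1:
  assumes "n > 0" shows "degree (xn_minus_1 n :: 'a::comm_ring_1 poly) = n"
proof (rule antisym)
  show "degree (xn_minus_1 n :: 'a poly) \<le> n" by (rule degree_le) (simp add: coeff_xn_minus_1)
  show "n \<le> degree (xn_minus_1 n :: 'a poly)"
    using assms by (intro le_degree) (simp add: coeff_xn_minus_1)
qed

lemma palindromic_if_rev_poly_eq_smult:
  fixes g :: "'a::field poly"
  assumes two: "(2::'a) = 0" and g0: "coeff g 0 \<noteq> 0"
    and rev: "rev_poly (degree g) g = smult b g"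
  shows "palindromic g"
proof -
  have "coeff g (degree g) = b * coeff g 0" "coeff g 0 = b * coeff g (degree g)"
    using arg_cong[OF rev, of "\<lambda>p. coeff p 0"] arg_cong[OF rev, of "\<lambda>p. coeff p (degree g)"]
    by (simp_all add: coeff_rev_poly)
  then have "b * b = 1" using g0 by (metis mult.assoc mult_cancel_right2)
  then have "(b - 1) * (b - 1) = 0" using two by (simp add: algebra_simps)
  then show ?thesis using rev by (simp add: palindromic_iff_rev_poly)
qed

text \<open>In characteristic two, \<open>x\<^sup>n - 1 = x\<^sup>n + 1\<close>.\<close>
lemma palindromic_if_smult_eq_xn_minus_1:
  fixes g :: "'a::field poly"
  assumes two: "(2::'a) = 0" and "n > 0" and X: "xn_minus_1 n = smult c g"
  shows "palindromic g"
proof -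
  have minus_one: "(-1::'a) = 1" using two by (simp add: eq_neg_iff_add_eq_0)
  have "coeff (xn_minus_1 n :: 'a poly) n \<noteq> 0" using \<open>n > 0\<close> by (simp add: coeff_xn_minus_1)
  then have "c \<noteq> 0" using X by auto
  then have g: "coeff g i = coeff (xn_minus_1 n) i / c" for i using X by simp
  have "degree g = n" using X \<open>c \<noteq> 0\<close> \<open>n > 0\<close>
    by (metis degree_smult_eq degree_xn_minus_1)
  then show ?thesis
    unfolding palindromic_def g using \<open>n > 0\<close> minus_one by (auto simp: coeff_xn_minus_1)
qed

definition skew_multiples_below :: "('a::comm_ring_1 \<Rightarrow> 'a) \<Rightarrow> nat \<Rightarrow> 'a poly \<Rightarrow> 'a poly set" where
  "skew_multiples_below th n g = {c. degree c < n \<and> (\<exists>f. c = skew_mult th f g)}"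

definition skew_reversal :: "('a::comm_ring_1 \<Rightarrow> 'a) \<Rightarrow> nat \<Rightarrow> 'a poly \<Rightarrow> 'a poly" where
  "skew_reversal th n c = map_poly th (rev_poly (n - 1) c)"

lemma degree_skew_reversal_less:
  assumes "n > 0" shows "degree (skew_reversal th n c) < n"
proof -
  have "degree (skew_reversal th n c) \<le> n - 1"
    unfolding skew_reversal_def using map_poly_degree_leq degree_rev_poly_le order.trans by blast
  with assms show ?thesis by linarith
qed

lemma odd_complement_degree:
  fixes n m :: nat
  assumes "even n" "even m" "m < n"
  shows "odd (n - 1 - m)" and "(n - 1 - m) + m = n - 1"
proof -
  show "odd (n - 1 - m)" using assms by simp
  show "(n - 1 - m) + m = n - 1" using assms by simp
qed

locale field_involution =
  fixes th :: "'a::field \<Rightarrow> 'a"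
  assumes th_add: "th (a + b) = th a + th b"
    and th_mult: "th (a * b) = th a * th b"
    and th_th [simp]: "th (th a) = a"
begin

lemma th_0 [simp]: "th 0 = 0"
  using th_add[of 0 0] by (metis add_cancel_right_right add_0)

lemma th_eq_0_iff [simp]: "th a = 0 \<longleftrightarrow> a = 0"
  by (metis th_0 th_th)

lemma th_1 [simp]: "th 1 = 1"
proof -
  have "th 1 * th 1 = th 1 * 1" using th_mult[of 1 1] by simp
  then show ?thesis by (simp only: mult_left_cancel th_eq_0_iff one_neq_zero not_False_eq_True)
qed

lemma th_sum: "th (\<Sum>i\<in>X. f i) = (\<Sum>i\<in>X. th (f i))"
  by (induction X rule: infinite_finite_induct) (simp_all add: th_add)

lemma th_funpow: "(th ^^ i) a = (if even i then a else th a)"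
  by (induction i) auto

abbreviation th_poly :: "'a poly \<Rightarrow> 'a poly" where
  "th_poly \<equiv> map_poly th"

lemma th_poly_add: "th_poly (p + q) = th_poly p + th_poly q"
  by (rule poly_eqI) (simp add: coeff_map_poly th_add)

lemma th_poly_mult: "th_poly (p * q) = th_poly p * th_poly q"
  by (rule poly_eqI) (simp add: coeff_map_poly coeff_mult th_sum th_mult)

lemma th_poly_th_poly [simp]: "th_poly (th_poly p) = p"
  by (rule poly_eqI) (simp add: coeff_map_poly)

lemma degree_th_poly [simp]: "degree (th_poly p) = degree p"
  by (rule degree_map_poly) simp

text \<open>As \<open>th\<close> is an involution, \<open>x\<^sup>i a = th\<^sup>i(a) x\<^sup>i\<close> is \<open>a x\<^sup>i\<close> for even \<open>i\<close>
  and \<open>th(a) x\<^sup>i\<close> for odd \<open>i\<close>.\<close>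
lemma skew_mult_eq: "skew_mult th p r = even_part p * r + odd_part p * th_poly r"
proof -
  have row: "(\<Sum>j\<le>degree r. monom ((th ^^ i) (coeff r j)) j) = (if even i then r else th_poly r)" for i
  proof -
    have "(\<Sum>j\<le>degree r. monom ((th ^^ i) (coeff r j)) j) =
        (\<Sum>j\<le>degree (if even i then r else th_poly r).
          monom (coeff (if even i then r else th_poly r) j) j)"
      by (simp add: th_funpow coeff_map_poly)
    then show ?thesis by (simp only: poly_as_sum_of_monoms)
  qed
  have "skew_mult th p r =
      (\<Sum>i\<le>degree p. monom (coeff p i) i * (\<Sum>j\<le>degree r. monom ((th ^^ i) (coeff r j)) j))"
    unfolding skew_mult_def by (simp add: sum_distrib_left mult_monom)
  also have "\<dots> = (\<Sum>i\<le>degree p. (if even i then monom (coeff p i) i else 0) * r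
      + (if odd i then monom (coeff p i) i else 0) * th_poly r)"
    by (intro sum.cong) (auto simp: row)
  also have "\<dots> = even_part p * r + odd_part p * th_poly r"
    by (simp add: parity_part_def sum.distrib sum_distrib_right)
  finally show ?thesis .
qed

lemma coeff_skew_mult: "coeff (skew_mult th p r) k =
   (\<Sum>i\<le>k. coeff p i * (if even i then coeff r (k - i) else th (coeff r (k - i))))"
  unfolding skew_mult_eq coeff_add coeff_mult sum.distrib[symmetric]
  by (intro sum.cong) (auto simp: coeff_parity_part coeff_map_poly)

lemma skew_mult_0_left [simp]: "skew_mult th 0 r = 0"
  by (simp add: skew_mult_eq)

lemma skew_mult_add_left: "skew_mult th (p + q) r = skew_mult th p r + skew_mult th q r"
  by (simp add: skew_mult_eq parity_part_add algebra_simps)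

lemma skew_mult_const_left [simp]: "skew_mult th [:a:] r = smult a r"
proof -
  have "even_part [:a:] = [:a:]" "odd_part [:a:] = 0"
    by (auto intro!: poly_eqI simp: coeff_parity_part coeff_pCons split: nat.split)
  then show ?thesis by (simp add: skew_mult_eq)
qed

lemma skew_mult_monom_odd: "odd N \<Longrightarrow> skew_mult th (monom a N) r = monom a N * th_poly r"
proof -
  assume "odd N"
  then have "even_part (monom a N) = 0" "odd_part (monom a N) = monom a N"
    by (auto intro!: poly_eqI simp: coeff_parity_part)
  then show ?thesis by (simp add: skew_mult_eq)
qed

lemma skew_mult_assoc: "skew_mult th (skew_mult th p q) r = skew_mult th p (skew_mult th q r)"
proof -
  have parts: "parity_part b (skew_mult th p q) =
      even_part p * parity_part b q + odd_part p * th_poly (parity_part (\<not> b) q)" for b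
    by (simp add: skew_mult_eq parity_part_add parity_part_mult[OF parity_part_idem]
        parity_part_map_poly)
  have "skew_mult th (skew_mult th p q) r =
     (even_part p * even_part q + odd_part p * th_poly (odd_part q)) * r
     + (even_part p * odd_part q + odd_part p * th_poly (even_part q)) * th_poly r"
    by (simp add: skew_mult_eq[of "skew_mult th p q"] parts)
  also have "\<dots> = even_part p * (even_part q * r + odd_part q * th_poly r)
      + odd_part p * th_poly (even_part q * r + odd_part q * th_poly r)"
    by (simp add: th_poly_add th_poly_mult algebra_simps)
  also have "\<dots> = skew_mult th p (skew_mult th q r)"
    by (simp add: skew_mult_eq[of p] skew_mult_eq[of q])
  finally show ?thesis .
qed

lemma degree_skew_mult:
  assumes "p \<noteq> 0" "r \<noteq> 0"
  shows "degree (skew_mult th p r) = degree p + degree r"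
proof -
  let ?d = "degree p + degree r"
  let ?t = "\<lambda>k i. coeff p i * (if even i then coeff r (k - i) else th (coeff r (k - i)))"
  have vanish: "?t k i = 0" if "i \<le> k" "i \<noteq> degree p" "?d \<le> k" for k i
  proof (cases "i < degree p")
    case True
    with that have "coeff r (k - i) = 0" by (intro coeff_eq_0) linarith
    then show ?thesis by simp
  next
    case False
    with that have "coeff p i = 0" by (intro coeff_eq_0) linarith
    then show ?thesis by simp
  qed
  have coeff_top: "coeff (skew_mult th p r) k =
      (if degree p \<le> k then ?t k (degree p) else 0)" if "?d \<le> k" for k
  proof -
    have "coeff (skew_mult th p r) k = (\<Sum>i\<le>k. if i = degree p then ?t k i else 0)"
      unfolding coeff_skew_mult using vanish[OF _ _ that] by (intro sum.cong) auto
    then show ?thesis by simp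
  qed
  have "coeff (skew_mult th p r) k = 0" if "?d < k" for k
    using coeff_top[of k] that by (simp add: coeff_eq_0)
  then have "degree (skew_mult th p r) \<le> ?d" by (intro degree_le) auto
  moreover have "coeff (skew_mult th p r) ?d \<noteq> 0"
    using coeff_top[of ?d] assms by simp
  ultimately show ?thesis using le_degree by (intro antisym)
qed


lemma skew_cyclic_code_eq:
  assumes "skew_right_dvd th g (xn_minus_1 n)"
  shows "skew_cyclic_code th n g = vec_of n ` skew_multiples_below th n g"
proof -
  obtain h where X: "xn_minus_1 n = skew_mult th h g"
    using assms unfolding skew_right_dvd_def by blast
  have "(\<exists>f k. c = skew_mult th f g + skew_mult th k (xn_minus_1 n)) \<longleftrightarrow> (\<exists>f. c = skew_mult th f g)"
    for c :: "'a poly"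
  proof
    assume "\<exists>f k. c = skew_mult th f g + skew_mult th k (xn_minus_1 n)"
    then obtain f k where "c = skew_mult th f g + skew_mult th k (xn_minus_1 n)" by blast
    then have "c = skew_mult th (f + skew_mult th k h) g"
      by (simp add: X skew_mult_add_left skew_mult_assoc)
    then show "\<exists>f. c = skew_mult th f g" ..
  next
    assume "\<exists>f. c = skew_mult th f g"
    then show "\<exists>f k. c = skew_mult th f g + skew_mult th k (xn_minus_1 n)"
      by (metis add.right_neutral skew_mult_0_left)
  qed
  then show ?thesis unfolding skew_cyclic_code_def skew_multiples_below_def by simp
qed

lemma right_divisor_xn_minus_1:
  assumes X: "xn_minus_1 n = skew_mult th h g" and "n > 0"
  shows "coeff g 0 \<noteq> 0" "degree h + degree g = n"
proof -
  have X0: "xn_minus_1 n \<noteq> (0 :: 'a poly)"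
    using degree_xn_minus_1[OF \<open>n > 0\<close>] \<open>n > 0\<close> by (metis degree_0 neq0_conv)
  have "coeff (xn_minus_1 n :: 'a poly) 0 \<noteq> 0" using \<open>n > 0\<close> by (simp add: coeff_xn_minus_1)
  then show "coeff g 0 \<noteq> 0" using X by (auto simp: coeff_skew_mult)
  have "h \<noteq> 0" "g \<noteq> 0" using X X0 by (auto simp: skew_mult_eq)
  then show "degree h + degree g = n"
    using X degree_skew_mult degree_xn_minus_1[OF \<open>n > 0\<close>] by metis
qed

text \<open>For odd \<open>N\<close> the reversal swaps even and odd parts, which cancels the twist by \<open>th\<close>.\<close>
lemma rev_poly_skew_mult_palindromic:
  assumes pal: "palindromic g" and N: "odd N" and F: "degree F \<le> N"
  shows "th_poly (rev_poly (N + degree g) (skew_mult th F g)) =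
    skew_mult th (th_poly (rev_poly N F)) g"
proof -
  have rev_g: "rev_poly (degree g) g = g" and rev_th_g: "rev_poly (degree g) (th_poly g) = th_poly g"
    using pal by (simp_all add: palindromic_iff_rev_poly rev_poly_map_poly)
  have "degree (parity_part b F) \<le> N" for b
    using F degree_parity_part_le order.trans by blast
  then have "rev_poly (N + degree g) (skew_mult th F g) =
      rev_poly N (even_part F) * g + rev_poly N (odd_part F) * th_poly g"
    by (simp add: skew_mult_eq rev_poly_add rev_poly_mult rev_g rev_th_g)
  then show ?thesis
    using N by (simp add: skew_mult_eq th_poly_add th_poly_mult parity_part_rev_poly
        parity_part_map_poly rev_poly_map_poly add.commute)
qed

lemma skew_mult_low_coeff_eq_0:
  assumes r0: "coeff r 0 \<noteq> 0" and low: "\<forall>k<N. coeff (skew_mult th p r) k = 0" and "t < N"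
  shows "coeff p t = 0"
  using \<open>t < N\<close>
proof (induction t rule: less_induct)
  case (less t)
  have "0 = (\<Sum>i<Suc t. coeff p i * (if even i then coeff r (t - i) else th (coeff r (t - i))))"
    using low less.prems by (simp add: coeff_skew_mult lessThan_Suc_atMost)
  also have "\<dots> = coeff p t * (if even t then coeff r 0 else th (coeff r 0))"
    using less.IH less.prems by simp
  finally show ?case using r0 by (auto split: if_splits)
qed

text \<open>Comparing lowest coefficients (\<open>g(0) \<noteq> 0\<close>) forces the left factor to be a monomial
  \<open>a x\<^sup>N\<close>; then the reversal of \<open>g\<close> is a scalar multiple of \<open>g\<close>.\<close>
lemma palindromic_if_rev_poly_skew_multiple:
  assumes two: "(2::'a) = 0" and g0: "coeff g 0 \<noteq> 0" and N: "odd N"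
    and F: "th_poly (rev_poly (N + degree g) g) = skew_mult th F g"
  shows "palindromic g"
proof -
  define r where "r = th_poly (rev_poly (N + degree g) g)"
  have "rev_poly N 1 = (monom 1 N :: 'a poly)"
    by (rule poly_eqI) (auto simp: coeff_rev_poly)
  then have r: "r = monom 1 N * th_poly (rev_poly (degree g) g)"
    using rev_poly_mult[of 1 N g "degree g"] by (simp add: r_def th_poly_mult map_poly_monom)
  have top: "coeff r (N + degree g) \<noteq> 0" using g0 by (simp add: r_def coeff_map_poly coeff_rev_poly)
  then have "N + degree g \<le> degree r" by (rule le_degree)
  moreover have "degree r \<le> N + degree g" by (simp add: r_def degree_rev_poly_le)
  ultimately have "degree r = N + degree g" by simp
  moreover have "F \<noteq> 0" "g \<noteq> 0" using top g0 F by (auto simp: r_def)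
  ultimately have "degree F = N" using F degree_skew_mult[of F g] by (auto simp: r_def)
  moreover have "\<forall>k<N. coeff (skew_mult th F g) k = 0"
    using F[folded r_def, symmetric] by (simp add: r coeff_monom_mult)
  then have "coeff F t = 0" if "t < N" for t
    using skew_mult_low_coeff_eq_0[OF g0] that by blast
  ultimately have "F = monom (coeff F N) N"
    by (intro poly_eqI) (metis coeff_monom coeff_eq_0 nat_neq_iff)
  then have "monom 1 N * th_poly (rev_poly (degree g) g) = skew_mult th (monom (coeff F N) N) g"
    using F r by (simp add: r_def)
  also have "\<dots> = monom (coeff F N) N * th_poly g"
    by (rule skew_mult_monom_odd[OF N])
  also have "\<dots> = monom 1 N * smult (coeff F N) (th_poly g)"
    by (simp add: smult_monom_mult)
  finally have "monom 1 N * th_poly (rev_poly (degree g) g) =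
      monom 1 N * smult (coeff F N) (th_poly g)" .
  then have "th_poly (rev_poly (degree g) g) = smult (coeff F N) (th_poly g)"
    by (metis monom_eq_0_iff mult_left_cancel one_neq_zero)
  then have "rev_poly (degree g) g = smult (th (coeff F N)) g"
    by (metis map_poly_smult th_0 th_mult th_poly_th_poly)
  then show ?thesis using palindromic_if_rev_poly_eq_smult[OF two g0] by blast
qed

lemma palindromic_if_skew_reversal_closed:
  assumes two: "(2::'a) = 0" and X: "xn_minus_1 n = skew_mult th h g"
    and n: "even n" "n > 0" and m: "even (degree g)"
    and closed: "\<forall>c\<in>skew_multiples_below th n g. skew_reversal th n c \<in> skew_multiples_below th n g"
  shows "palindromic g"
proof (cases "degree g = n")
  case True
  then have "h = [:coeff h 0:]"
    using right_divisor_xn_minus_1(2)[OF X \<open>n > 0\<close>] degree_0_id[of h] by simp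
  then have "xn_minus_1 n = smult (coeff h 0) g" using X by (metis skew_mult_const_left)
  then show ?thesis using palindromic_if_smult_eq_xn_minus_1[OF two \<open>n > 0\<close>] by blast
next
  case False
  then have "degree g < n" using right_divisor_xn_minus_1(2)[OF X \<open>n > 0\<close>] by simp
  moreover have "g = skew_mult th [:1:] g" by simp
  ultimately have "g \<in> skew_multiples_below th n g"
    unfolding skew_multiples_below_def by blast
  then obtain F where F: "skew_reversal th n g = skew_mult th F g"
    using closed unfolding skew_multiples_below_def by blast
  note N = odd_complement_degree[OF n(1) m \<open>degree g < n\<close>]
  show ?thesis
    by (rule palindromic_if_rev_poly_skew_multiple
        [OF two right_divisor_xn_minus_1(1)[OF X \<open>n > 0\<close>] N(1)])
      (unfold N(2), fold skew_reversal_def, rule F)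
qed

lemma skew_reversal_closed_if_palindromic:
  assumes pal: "palindromic g" and X: "xn_minus_1 n = skew_mult th h g"
    and n: "even n" "n > 0" and m: "even (degree g)"
  shows "\<forall>c\<in>skew_multiples_below th n g. skew_reversal th n c \<in> skew_multiples_below th n g"
proof
  fix c assume "c \<in> skew_multiples_below th n g"
  then obtain F where c: "c = skew_mult th F g" and "degree c < n"
    unfolding skew_multiples_below_def by blast
  have "skew_reversal th n c = skew_mult th (th_poly (rev_poly (n - 1 - degree g) F)) g"
  proof (cases "F = 0")
    case True then show ?thesis by (simp add: c skew_reversal_def)
  next
    case False
    moreover have "g \<noteq> 0" using right_divisor_xn_minus_1(1)[OF X \<open>n > 0\<close>] by auto
    ultimately have "degree F + degree g < n"
      using \<open>degree c < n\<close> by (simp add: c degree_skew_mult)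
    then have F: "degree F \<le> n - 1 - degree g" and "degree g < n" by simp_all
    note N = odd_complement_degree[OF n(1) m \<open>degree g < n\<close>]
    have "skew_reversal th n c = th_poly (rev_poly (n - 1 - degree g + degree g) (skew_mult th F g))"
      unfolding N(2) skew_reversal_def c ..
    also have "\<dots> = skew_mult th (th_poly (rev_poly (n - 1 - degree g) F)) g"
      by (rule rev_poly_skew_mult_palindromic[OF pal N(1) F])
    finally show ?thesis .
  qed
  then show "skew_reversal th n c \<in> skew_multiples_below th n g"
    unfolding skew_multiples_below_def using degree_skew_reversal_less[OF \<open>n > 0\<close>] by blast
qed

lemma skew_reversal_closed_iff_palindromic:
  assumes "(2::'a) = 0" and "skew_right_dvd th g (xn_minus_1 n)"
    and "even n" "n > 0" and "even (degree g)"
  shows "(\<forall>c\<in>skew_multiples_below th n g. skew_reversal th n c \<in> skew_multiples_below th n g)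
    \<longleftrightarrow> palindromic g"
  using assms palindromic_if_skew_reversal_closed skew_reversal_closed_if_palindromic
  unfolding skew_right_dvd_def by metis

end

lemma of_nat_card_UNIV: "of_nat (card (UNIV :: 'a::{finite,ring_1} set)) = (0::'a)"
proof -
  have "(\<Sum>x\<in>UNIV. x + 1) = (\<Sum>x\<in>UNIV. (x::'a))"
    by (rule sum.reindex_bij_witness[of _ "\<lambda>x. x - 1" "\<lambda>x. x + 1"]) auto
  then show ?thesis by (simp add: sum.distrib)
qed

lemma power_card_UNIV: "(a::'a::{finite,field}) ^ card (UNIV :: 'a set) = a"
proof (cases "a = 0")
  case True
  then show ?thesis by (simp add: zero_power finite_UNIV_card_ge_0)
next
  case False
  define S where "S = UNIV - {0::'a}"
  have "(\<Prod>x\<in>S. a * x) = (\<Prod>x\<in>S. x)"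
    by (rule prod.reindex_bij_witness[of _ "\<lambda>x. x / a" "\<lambda>x. a * x"]) (use False in \<open>auto simp: S_def\<close>)
  then have "a ^ card S = 1" by (simp add: prod.distrib S_def)
  moreover have "card (UNIV :: 'a set) = Suc (card S)"
    using finite_UNIV_card_ge_0[where 'a = 'a] by (simp add: S_def card_Diff_singleton)
  ultimately show ?thesis by simp
qed

lemma add_power_two_power:
  assumes "(2::'a::comm_ring_1) = 0"
  shows "(a + b) ^ (2 ^ k) = a ^ (2 ^ k) + (b::'a) ^ (2 ^ k)"
proof (induction k)
  case (Suc k)
  have "(x + y) ^ 2 = x ^ 2 + y ^ 2" for x y :: 'a
    using assms by (simp add: power2_sum)
  with Suc show ?case unfolding power_Suc2 power_mult by simp
qed simp

lemma frobenius_field_involution: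
  assumes card: "card (UNIV :: 'a::{finite,field} set) = 4 ^ (2 * s)" and "s \<ge> 1"
  shows "(2::'a) = 0" and "field_involution (\<lambda>a::'a. a ^ (4 ^ s))"
proof -
  have "(2::'a) ^ (4 * s) = 0"
    using of_nat_card_UNIV[where 'a = 'a] card by (simp add: power_mult flip: power_mult_distrib)
  then show two: "(2::'a) = 0" by simp
  show "field_involution (\<lambda>a::'a. a ^ (4 ^ s))"
  proof
    fix a b :: 'a
    show "(a + b) ^ 4 ^ s = a ^ 4 ^ s + b ^ 4 ^ s"
      using add_power_two_power[OF two, of a b "2 * s"] by (simp add: power_mult)
    show "(a * b) ^ 4 ^ s = a ^ 4 ^ s * b ^ 4 ^ s"
      by (rule power_mult_distrib)
    show "(a ^ 4 ^ s) ^ 4 ^ s = a"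
      using power_card_UNIV[of a] card
    by (simp add: power_mult[symmetric] power_add[symmetric] mult_2)
  qed
qed

lemma dna_map_inj:
  assumes len: "\<forall>x. length (\<tau> x) = k" and inj: "inj \<tau>"
  shows "length v = length w \<Longrightarrow> dna_map \<tau> v = dna_map \<tau> w \<Longrightarrow> v = w"
proof (induction v arbitrary: w)
  case (Cons x v)
  then obtain y w' where w: "w = y # w'" by (cases w) auto
  with Cons.prems len have "\<tau> x = \<tau> y" "dna_map \<tau> v = dna_map \<tau> w'"
    by (simp_all add: dna_map_def)
  with Cons inj w show ?case by (simp add: inj_eq)
qed simp

lemma rev_dna_map:
  assumes "\<forall>b. \<tau> (\<theta> b) = rev (\<tau> b)"
  shows "rev (dna_map \<tau> v) = dna_map \<tau> (map \<theta> (rev v))"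
  using assms by (simp add: dna_map_def rev_concat rev_map o_def)

lemma reversible_dna_code_iff:
  assumes "\<forall>x. length (\<tau> x) = k" "inj \<tau>" "\<forall>b. \<tau> (\<theta> b) = rev (\<tau> b)"
    and "\<forall>v\<in>Cd. length v = n"
  shows "reversible_dna_code \<tau> Cd \<longleftrightarrow> (\<forall>v\<in>Cd. map \<theta> (rev v) \<in> Cd)"
proof -
  have "dna_map \<tau> (map \<theta> (rev v)) \<in> dna_map \<tau> ` Cd \<longleftrightarrow> map \<theta> (rev v) \<in> Cd" if "v \<in> Cd" for v
    using dna_map_inj[OF assms(1,2)] assms(4) that by (metis image_eqI imageE length_map length_rev)
  then show ?thesis unfolding reversible_dna_code_def rev_dna_map[OF assms(3)] by blast
qed

lemma vec_of_skew_reversal: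
  "th 0 = 0 \<Longrightarrow> vec_of n (skew_reversal th n c) = map th (rev (vec_of n c))"
  unfolding vec_of_def skew_reversal_def
  by (rule nth_equalityI) (auto simp: rev_nth coeff_map_poly coeff_rev_poly)

lemma vec_of_inj:
  assumes "degree c < n" "degree d < n" "vec_of n c = vec_of n d"
  shows "c = d"
proof (rule poly_eqI)
  fix i
  show "coeff c i = coeff d i"
  proof (cases "i < n")
    case True
    then show ?thesis using arg_cong[OF assms(3), of "\<lambda>v. v ! i"] by (simp add: vec_of_def)
  qed (use assms in \<open>simp add: coeff_eq_0\<close>)
qed

lemma vec_of_image_closed_iff:
  assumes "th 0 = 0" and P: "\<forall>c\<in>P. degree c < n"
  shows "(\<forall>v\<in>vec_of n ` P. map th (rev v) \<in> vec_of n ` P) \<longleftrightarrow> (\<forall>c\<in>P. skew_reversal th n c \<in> P)"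
proof -
  have "degree (skew_reversal th n c) < n" if "c \<in> P" for c
    using P that degree_skew_reversal_less[of n th c] by fastforce
  then show ?thesis
    using vec_of_inj P by (auto simp: vec_of_skew_reversal[of th, OF assms(1), symmetric]) blast
qed

theorem theorem1:
  fixes s n :: nat and \<theta> :: "'a::{finite,field} \<Rightarrow> 'a"
    and \<tau> :: "'a \<Rightarrow> nucleotide list" and g :: "'a poly"
  assumes "s \<ge> 1"
    and "card (UNIV :: 'a set) = 4 ^ (2 * s)"
    and "\<theta> = (\<lambda>a. a ^ (4 ^ s))"
    and "bij_betw \<tau> UNIV {w. length w = 2 * s}"
    and "\<forall>\<beta>. \<tau> (\<beta> ^ (4 ^ s)) = rev (\<tau> \<beta>)"
    and "even n" and "n > 0"
    and "skew_right_dvd \<theta> g (xn_minus_1 n)"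
    and "even (degree g)"
  shows "reversible_dna_code \<tau> (skew_cyclic_code \<theta> n g) \<longleftrightarrow> palindromic g"
proof -
  note two = frobenius_field_involution(1)[OF assms(2,1)]
  interpret field_involution \<theta>
    using frobenius_field_involution(2)[OF assms(2,1)] assms(3) by simp
  let ?M = "skew_multiples_below \<theta> n g"
  have "\<forall>x. length (\<tau> x) = 2 * s" "inj \<tau>"
    using assms(4) by (auto simp: bij_betw_def dest: bij_betw_apply)
  moreover have "\<forall>b. \<tau> (\<theta> b) = rev (\<tau> b)" using assms(3,5) by simp
  moreover have "\<forall>v\<in>vec_of n ` ?M. length v = n" by (simp add: vec_of_def)
  ultimately have "reversible_dna_code \<tau> (vec_of n ` ?M) \<longleftrightarrow>
      (\<forall>v\<in>vec_of n ` ?M. map \<theta> (rev v) \<in> vec_of n ` ?M)"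
    by (rule reversible_dna_code_iff)
  then have "reversible_dna_code \<tau> (skew_cyclic_code \<theta> n g) \<longleftrightarrow>
      (\<forall>v\<in>vec_of n ` ?M. map \<theta> (rev v) \<in> vec_of n ` ?M)"
    by (simp only: skew_cyclic_code_eq[OF assms(8)])
  also have "\<dots> \<longleftrightarrow> (\<forall>c\<in>?M. skew_reversal \<theta> n c \<in> ?M)"
    by (rule vec_of_image_closed_iff) (simp_all add: skew_multiples_below_def)
  also have "\<dots> \<longleftrightarrow> palindromic g"
    using skew_reversal_closed_iff_palindromic[OF two assms(8,6,7,9)] .
  finally show ?thesis .
qed

end
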